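(* Let $\mathcal L$ be the Laplacian mechanism, let $c_1,\ldots,c_n>0$, and let the contract functions be $W_i(\varepsilon)=c_i\varepsilon$ for $i=1,\ldots,n$. Define micro-payments $\mu_i(\mathbf Q)=\frac{\gamma c_i}{\sqrt{v/2}}|q_i|$ for $\mathbf Q=(\mathbf q,v)$, $i=1,\ldots,n$. Then $(\boldsymbol\varepsilon,\boldsymbol\mu,\mathbf W)$ is semi-balanced: each $\mu_i$ is fair, micro arbitrage-free, and compensating for $W_i$ with respect to $\mathcal L$.
   Context: Fix a bounded set $X\subseteq\mathbb R$ and let $\gamma=\sup_{x\in X}|x|$. Databases are vectors $\mathbf x\in X^n$; $\mathbf x^{(i)}$ is $\mathbf x$ with the $i$-th coordinate replaced by $0$. Queries are pairs $\mathbf Q=(\mathbf q,v)$ with $\mathbf q\in\mathbb R^n$ and $v\in(0,\infty)$. The Laplacian mechanism answers $\mathbf Q$ by $\mathcal L_{\mathbf Q}(\mathbf x)=\mathbf q\cdot\mathbf x+\rho$, where $\rho$ has the Laplace density $\frac{1}{2b}e^{-|t|/b}$ with $b=\sqrt{v/2}$. The privacy loss of item $i$ is $\varepsilon_i(\mathcal L_{\mathbf Q})=\sup_{S,\mathbf x}\left|\log\frac{\Pr[\mathcal L_{\mathbf Q}(\mathbf x)\in S]}{\Pr[\mathcal L_{\mathbf Q}(\mathbf x^{(i)})\in S]}\right|$ over $\mathbf x\in X^n$ and measurable $S\subseteq\mathbb R$. The determinacy relation $\mathbf S\rightarrow\mathbf Q$ (finite multisets of queries to queries) is the smallest relation satisfying: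 (Summation) $\{(\mathbf q_1,v_1),\ldots,(\mathbf q_k,v_k)\}\rightarrow(\sum_j\mathbf q_j,\sum_jv_j)$; (Scalar multiplication) $\{(\mathbf q,v)\}\rightarrow(c\mathbf q,c^2v)$ for $c\in\mathbb R$; (Relaxation) $\{(\mathbf q,v)\}\rightarrow(\mathbf q,v')$ for $v\le v'$; (Transitivity) if $\mathbf S_j\rightarrow\mathbf Q_j$ for $j=1,\ldots,k$ and $\{\mathbf Q_1,\ldots,\mathbf Q_k\}\rightarrow\mathbf Q$ then $\mathbf S_1\uplus\cdots\uplus\mathbf S_k\rightarrow\mathbf Q$. A function $\mu$ from queries to $[0,\infty]$ is arbitrage-free if for every $m\ge 1$ and queries with $\{\mathbf Q_1,\ldots,\mathbf Q_m\}\rightarrow\mathbf Q$, $\mu(\mathbf Q)\le\sum_j\mu(\mathbf Q_j)$. A micro-payment $\mu_i$ is fair if $q_i=0$ implies $\mu_i(\mathbf q,v)=0$; micro arbitrage-free if $\mu_i$ is arbitrage-free; compensating for the contract $W_i$ (w.r.t. mechanism $\mathcal L$) if $\mu_i(\mathbf Q)\ge W_i(\varepsilon_i(\mathcal L_{\mathbf Q}))$ for every query $\mathbf Q$. *)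

theory Defs
  imports "HOL-Probability.Probability"
begin

text \<open>Indices 1..n are the elements of the finite type 'n; vectors in R^n are real^'n.
  A query is a pair (q, v); it is a genuine query iff v > 0.\<close>

type_synonym 'n query = "(real ^ 'n) \<times> real"

definition is_query :: "'n query \<Rightarrow> bool" where
  "is_query Q \<longleftrightarrow> snd Q > 0"

definition gamma :: "real set \<Rightarrow> real" where
  "gamma X = (SUP x\<in>X. \<bar>x\<bar>)"

definition databases :: "real set \<Rightarrow> (real ^ 'n::finite) set" where
  "databases X = {x. \<forall>j. x $ j \<in> X}"

definition zero_at :: "real ^ 'n \<Rightarrow> 'n \<Rightarrow> real ^ 'n" where
  "zero_at x i = (\<chi> j. if j = i then 0 else x $ j)"

definition laplace_density :: "real \<Rightarrow> real \<Rightarrow> real" where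
  "laplace_density b t = exp (- \<bar>t\<bar> / b) / (2 * b)"

definition laplace_mech :: "('n::finite) query \<Rightarrow> real ^ 'n \<Rightarrow> real measure" where
  "laplace_mech Q x = density lborel
     (\<lambda>t. ennreal (laplace_density (sqrt (snd Q / 2)) (t - fst Q \<bullet> x)))"

text \<open>Privacy loss of item i. The supremum ranges over databases and measurable S
  for which the probabilities are positive (the log-ratio is undefined, 0/0, otherwise).\<close>
definition privacy_loss :: "real set \<Rightarrow> 'n::finite \<Rightarrow> 'n query \<Rightarrow> ennreal" where
  "privacy_loss X i Q = (SUP p \<in> {(x, S). x \<in> databases X \<and> S \<in> sets borel
        \<and> measure (laplace_mech Q x) S > 0 \<and> measure (laplace_mech Q (zero_at x i)) S > 0}.
      ennreal \<bar>ln (measure (laplace_mech Q (fst p)) (snd p)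
                   / measure (laplace_mech Q (zero_at (fst p) i)) (snd p))\<bar>)"

inductive determines :: "('n::finite) query multiset \<Rightarrow> 'n query \<Rightarrow> bool" where
  summation: "S \<noteq> {#} \<Longrightarrow> (\<forall>Q\<in>#S. is_query Q) \<Longrightarrow>
     determines S (sum_mset (image_mset fst S), sum_mset (image_mset snd S))"
| scalar: "is_query (q, v) \<Longrightarrow> c \<noteq> 0 \<Longrightarrow> determines {#(q, v)#} (c *\<^sub>R q, c\<^sup>2 * v)"
| relax: "is_query (q, v) \<Longrightarrow> v \<le> v' \<Longrightarrow> determines {#(q, v)#} (q, v')"
| trans: "(\<forall>p\<in>set Ps. determines (fst p) (snd p)) \<Longrightarrow> determines (mset (map snd Ps)) Q \<Longrightarrow>
     determines (sum_list (map fst Ps)) Q"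

definition arbitrage_free :: "(('n::finite) query \<Rightarrow> ennreal) \<Rightarrow> bool" where
  "arbitrage_free \<mu> \<longleftrightarrow> (\<forall>Qs Q. length Qs \<ge> 1 \<and> (\<forall>Q'\<in>set Qs. is_query Q') \<and> is_query Q
      \<and> determines (mset Qs) Q \<longrightarrow> \<mu> Q \<le> sum_list (map \<mu> Qs))"

definition fair :: "'n::finite \<Rightarrow> ('n query \<Rightarrow> ennreal) \<Rightarrow> bool" where
  "fair i \<mu> \<longleftrightarrow> (\<forall>q v. is_query (q, v) \<and> q $ i = 0 \<longrightarrow> \<mu> (q, v) = 0)"

definition compensating :: "real set \<Rightarrow> 'n::finite \<Rightarrow> (ennreal \<Rightarrow> ennreal) \<Rightarrow> ('n query \<Rightarrow> ennreal) \<Rightarrow> bool" where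
  "compensating X i W \<mu> \<longleftrightarrow> (\<forall>Q. is_query Q \<longrightarrow> W (privacy_loss X i Q) \<le> \<mu> Q)"

end

theory Submission
  imports Defs
begin

text \<open>Arbitrage-freeness: the price \<open>K |q\<^sub>i| / sqrt (v/2)\<close> is invariant under scalar
  multiplication, decreases under relaxation, and is subadditive under summation because the
  variance of a sum dominates each summand's variance; transitivity then preserves the price
  inequality along derivations of \<open>\<rightarrow>\<close>.
  Compensation: replacing \<open>x\<^sub>i\<close> by 0 shifts the centre of the Laplace density by
  \<open>|q\<^sub>i x\<^sub>i| \<le> \<gamma> |q\<^sub>i|\<close>, which changes the density pointwise, hence the probability of every
  event, by a factor of at most \<open>exp (\<gamma> |q\<^sub>i| / b)\<close>.\<close>

definition laplace_price :: "real \<Rightarrow> 'n::finite \<Rightarrow> 'n query \<Rightarrow> real" where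
  "laplace_price K i Q = K / sqrt (snd Q / 2) * \<bar>fst Q $ i\<bar>"

lemma laplace_price_nonneg: "K \<ge> 0 \<Longrightarrow> is_query Q \<Longrightarrow> laplace_price K i Q \<ge> 0"
  by (simp add: laplace_price_def is_query_def)

lemma laplace_price_nonpos: "K \<le> 0 \<Longrightarrow> is_query Q \<Longrightarrow> laplace_price K i Q \<le> 0"
  by (simp add: laplace_price_def is_query_def divide_nonpos_pos mult_nonpos_nonneg)

lemma laplace_price_sum_le:
  fixes S :: "'n::finite query multiset"
  assumes "K \<ge> 0" and "\<forall>Q\<in>#S. snd Q > 0" and "(\<Sum>Q\<in>#S. snd Q) \<le> V"
  shows "K / sqrt (V / 2) * \<bar>(\<Sum>Q\<in>#S. fst Q) $ i\<bar> \<le> (\<Sum>Q\<in>#S. laplace_price K i Q)"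
  using assms(2,3)
proof (induction S arbitrary: V)
  case empty
  then show ?case by simp
next
  case (add P S)
  obtain q v where P: "P = (q, v)" by force
  have "v > 0" using add.prems P by simp
  have "0 \<le> (\<Sum>Q\<in>#S. snd Q)"
    using sum_mset_mono[of S "\<lambda>_. 0" snd] add.prems by force
  then have "v \<le> V" and "(\<Sum>Q\<in>#S. snd Q) \<le> V"
    using add.prems P \<open>v > 0\<close> by auto
  define k where "k = K / sqrt (V / 2)"
  have "k \<ge> 0" using \<open>K \<ge> 0\<close> \<open>v \<le> V\<close> \<open>v > 0\<close> by (simp add: k_def)
  have "k \<le> K / sqrt (v / 2)"
    unfolding k_def using \<open>v \<le> V\<close> \<open>v > 0\<close> \<open>K \<ge> 0\<close> by (intro divide_left_mono) auto
  have "k * \<bar>(\<Sum>Q\<in>#add_mset P S. fst Q) $ i\<bar> \<le> k * (\<bar>q $ i\<bar> + \<bar>(\<Sum>Q\<in>#S. fst Q) $ i\<bar>)"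
    using \<open>k \<ge> 0\<close> P by (intro mult_left_mono) auto
  also have "\<dots> \<le> K / sqrt (v / 2) * \<bar>q $ i\<bar> + (\<Sum>Q\<in>#S. laplace_price K i Q)"
    unfolding distrib_left
  proof (rule add_mono)
    show "k * \<bar>q $ i\<bar> \<le> K / sqrt (v / 2) * \<bar>q $ i\<bar>"
      using \<open>k \<le> K / sqrt (v / 2)\<close> by (rule mult_right_mono) simp
    show "k * \<bar>(\<Sum>Q\<in>#S. fst Q) $ i\<bar> \<le> (\<Sum>Q\<in>#S. laplace_price K i Q)"
      using add.IH[OF _ \<open>(\<Sum>Q\<in>#S. snd Q) \<le> V\<close>] add.prems by (simp add: k_def)
  qed
  finally show ?case using P by (simp add: k_def laplace_price_def)
qed

lemma sum_mset_map_snd_le_sum_list_map_fst: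
  fixes f :: "'a \<Rightarrow> 'b::ordered_comm_monoid_add"
  assumes "\<forall>p\<in>set Ps. f (snd p) \<le> (\<Sum>x\<in>#fst p. f x)"
  shows "(\<Sum>x\<in>#mset (map snd Ps). f x) \<le> (\<Sum>x\<in>#sum_list (map fst Ps). f x)"
  using assms by (induction Ps) (auto intro: add_mono)

lemma determines_laplace_price_le:
  assumes "determines S Q" and "K \<ge> 0"
  shows "laplace_price K i Q \<le> (\<Sum>Q'\<in>#S. laplace_price K i Q')"
  using assms(1)
proof (induction rule: determines.induct)
  case (summation S)
  then show ?case
    using laplace_price_sum_le[OF \<open>K \<ge> 0\<close>, of S _ i] by (auto simp: laplace_price_def is_query_def)
next
  case (scalar q v c)
  have "sqrt (c\<^sup>2 * v / 2) = \<bar>c\<bar> * sqrt (v / 2)"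
    by (simp add: real_sqrt_mult flip: times_divide_eq_right)
  then show ?case using scalar by (simp add: laplace_price_def is_query_def abs_mult)
next
  case (relax q v v')
  then show ?case
    using \<open>K \<ge> 0\<close> by (auto simp: laplace_price_def is_query_def intro!: mult_right_mono divide_left_mono)
next
  case (trans Ps Q)
  then show ?case using sum_mset_map_snd_le_sum_list_map_fst[of Ps "laplace_price K i"] by auto
qed

lemma arbitrage_free_laplace_price: "arbitrage_free (\<lambda>Q :: 'n::finite query. ennreal (laplace_price K i Q))"
  unfolding arbitrage_free_def
proof (intro allI impI)
  fix Qs :: "'n query list" and Q
  assume H: "1 \<le> length Qs \<and> (\<forall>Q'\<in>set Qs. is_query Q') \<and> is_query Q \<and> determines (mset Qs) Q"
  show "ennreal (laplace_price K i Q) \<le> (\<Sum>Q'\<leftarrow>Qs. ennreal (laplace_price K i Q'))"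
  proof (cases "K \<ge> 0")
    case True
    have "laplace_price K i Q \<le> (\<Sum>Q'\<leftarrow>Qs. laplace_price K i Q')"
      using determines_laplace_price_le[of "mset Qs" Q K i] H True
      by (simp add: sum_mset_sum_list flip: mset_map)
    then show ?thesis
      using H True by (simp add: sum_list_ennreal laplace_price_nonneg ennreal_leI)
  next
    case False
    \<comment> \<open>needed because \<open>gamma {}\<close>, a supremum of the empty set, is an unspecified real\<close>
    then show ?thesis using H laplace_price_nonpos[of K Q i] by (simp add: ennreal_neg)
  qed
qed

definition laplace_measure :: "real \<Rightarrow> real \<Rightarrow> real measure" where
  "laplace_measure b a = density lborel (\<lambda>t. ennreal (laplace_density b (t - a)))"

lemma laplace_mech_eq: "laplace_mech Q x = laplace_measure (sqrt (snd Q / 2)) (fst Q \<bullet> x)"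
  by (simp add: laplace_mech_def laplace_measure_def)

lemma laplace_density_nonneg: "b > 0 \<Longrightarrow> laplace_density b t \<ge> 0"
  by (simp add: laplace_density_def)

lemma laplace_density_shift_le:
  assumes "b > 0"
  shows "laplace_density b (t - a) \<le> exp (\<bar>a - a'\<bar> / b) * laplace_density b (t - a')"
proof -
  have "- \<bar>t - a\<bar> / b \<le> \<bar>a - a'\<bar> / b + - \<bar>t - a'\<bar> / b"
    using \<open>b > 0\<close> by (simp add: field_simps)
  then have "exp (- \<bar>t - a\<bar> / b) \<le> exp (\<bar>a - a'\<bar> / b) * exp (- \<bar>t - a'\<bar> / b)"
    by (simp flip: exp_add)
  then show ?thesis
    using \<open>b > 0\<close> unfolding laplace_density_def by (simp add: divide_right_mono mult.assoc)
qed

lemma emeasure_laplace_measure_shift_le: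
  assumes "b > 0" and "S \<in> sets borel"
  shows "emeasure (laplace_measure b a) S
    \<le> ennreal (exp (\<bar>a - a'\<bar> / b)) * emeasure (laplace_measure b a') S"
proof -
  have meas: "(\<lambda>t. ennreal (laplace_density b (t - a''))) \<in> borel_measurable borel" for a''
    unfolding laplace_density_def by measurable
  have "emeasure (laplace_measure b a) S = (\<integral>\<^sup>+ t. ennreal (laplace_density b (t - a)) * indicator S t \<partial>lborel)"
    unfolding laplace_measure_def using assms meas by (subst emeasure_density) auto
  also have "\<dots> \<le> (\<integral>\<^sup>+ t. ennreal (exp (\<bar>a - a'\<bar> / b)) * (ennreal (laplace_density b (t - a')) * indicator S t) \<partial>lborel)"
  proof (rule nn_integral_mono)
    fix t
    have "ennreal (laplace_density b (t - a)) \<le> ennreal (exp (\<bar>a - a'\<bar> / b)) * ennreal (laplace_density b (t - a'))"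
      using laplace_density_shift_le[OF \<open>b > 0\<close>, of t a a'] laplace_density_nonneg[OF \<open>b > 0\<close>]
      by (simp add: ennreal_leI flip: ennreal_mult)
    then show "ennreal (laplace_density b (t - a)) * indicator S t
      \<le> ennreal (exp (\<bar>a - a'\<bar> / b)) * (ennreal (laplace_density b (t - a')) * indicator S t)"
      by (cases "t \<in> S") auto
  qed
  also have "\<dots> = ennreal (exp (\<bar>a - a'\<bar> / b)) * emeasure (laplace_measure b a') S"
    unfolding laplace_measure_def using assms meas
    by (subst emeasure_density) (auto intro!: nn_integral_cmult)
  finally show ?thesis .
qed

lemma measure_le_if_emeasure_le:
  assumes "emeasure M S \<le> ennreal E * emeasure N S" and "E \<ge> 0" and "measure N S > 0"
  shows "measure M S \<le> E * measure N S"
proof -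
  have "emeasure N S = ennreal (measure N S)"
    using \<open>measure N S > 0\<close> by (cases "emeasure N S") (auto simp: measure_def)
  then have "emeasure M S \<le> ennreal (E * measure N S)"
    using assms by (simp add: ennreal_mult)
  then show ?thesis
    unfolding measure_def[of M] using assms by (intro enn2real_leI) auto
qed

lemma abs_ln_div_le:
  fixes m m' d :: real
  assumes "m > 0" "m' > 0" "m \<le> exp d * m'" "m' \<le> exp d * m"
  shows "\<bar>ln (m / m')\<bar> \<le> d"
proof -
  have "ln m \<le> d + ln m'" and "ln m' \<le> d + ln m"
    using assms ln_le_cancel_iff[of m "exp d * m'"] ln_le_cancel_iff[of m' "exp d * m"]
    by (auto simp: ln_mult)
  then show ?thesis using assms by (simp add: ln_div)
qed

lemma inner_diff_zero_at: "q \<bullet> x - q \<bullet> zero_at x i = q $ i * x $ i"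
proof -
  have "q \<bullet> x - q \<bullet> zero_at x i = (\<Sum>j\<in>UNIV. q $ j * (x $ j - zero_at x i $ j))"
    by (simp add: inner_vec_def right_diff_distrib flip: sum_subtractf)
  also have "\<dots> = (\<Sum>j\<in>UNIV. if j = i then q $ i * x $ i else 0)"
    by (rule sum.cong) (auto simp: zero_at_def)
  finally show ?thesis by simp
qed

lemma abs_le_gamma: "bounded X \<Longrightarrow> y \<in> X \<Longrightarrow> \<bar>y\<bar> \<le> gamma X"
  unfolding gamma_def by (rule cSUP_upper) (auto simp: bounded_iff intro: bdd_aboveI2)

lemma privacy_loss_le:
  assumes "bounded X" and "v > 0"
  shows "privacy_loss X i (q, v) \<le> ennreal (gamma X * \<bar>q $ i\<bar> / sqrt (v / 2))"
  unfolding privacy_loss_def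
proof (rule SUP_least, clarify)
  fix x S
  assume x: "x \<in> databases X" and S: "S \<in> sets borel"
    and pos: "0 < measure (laplace_mech (q, v) x) S" "0 < measure (laplace_mech (q, v) (zero_at x i)) S"
  define b where "b = sqrt (v / 2)"
  define d where "d = \<bar>q \<bullet> x - q \<bullet> zero_at x i\<bar> / b"
  have "b > 0" using \<open>v > 0\<close> by (simp add: b_def)
  have "\<bar>ln (measure (laplace_mech (q, v) x) S / measure (laplace_mech (q, v) (zero_at x i)) S)\<bar> \<le> d"
    using pos emeasure_laplace_measure_shift_le[OF \<open>b > 0\<close> S, of "q \<bullet> x" "q \<bullet> zero_at x i"]
      emeasure_laplace_measure_shift_le[OF \<open>b > 0\<close> S, of "q \<bullet> zero_at x i" "q \<bullet> x"]
    by (intro abs_ln_div_le measure_le_if_emeasure_le)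
       (auto simp: laplace_mech_eq d_def b_def abs_minus_commute)
  also have "d \<le> gamma X * \<bar>q $ i\<bar> / b"
  proof -
    have "\<bar>x $ i\<bar> \<le> gamma X"
      using abs_le_gamma[OF \<open>bounded X\<close>] x by (auto simp: databases_def)
    then have "\<bar>q $ i\<bar> * \<bar>x $ i\<bar> \<le> gamma X * \<bar>q $ i\<bar>"
      by (metis abs_ge_zero mult.commute mult_left_mono)
    then show ?thesis
      unfolding d_def inner_diff_zero_at using \<open>b > 0\<close> by (simp add: abs_mult divide_right_mono)
  qed
  finally show "ennreal \<bar>ln (measure (laplace_mech (q, v) (fst (x, S))) (snd (x, S)) /
      measure (laplace_mech (q, v) (zero_at (fst (x, S)) i)) (snd (x, S)))\<bar>
    \<le> ennreal (gamma X * \<bar>q $ i\<bar> / sqrt (v / 2))"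
    by (simp add: b_def ennreal_leI)
qed

theorem proposition9:
  fixes X :: "real set" and c :: "'n::finite \<Rightarrow> real"
    and W :: "'n \<Rightarrow> ennreal \<Rightarrow> ennreal" and \<mu> :: "'n \<Rightarrow> 'n query \<Rightarrow> ennreal"
  assumes "bounded X"
    and "\<And>i. c i > 0"
    and "\<And>i e. W i e = ennreal (c i) * e"
    and "\<And>i q v. \<mu> i (q, v) = ennreal (gamma X * c i / sqrt (v / 2) * \<bar>q $ i\<bar>)"
  shows "\<forall>i. fair i (\<mu> i) \<and> arbitrage_free (\<mu> i) \<and> compensating X i (W i) (\<mu> i)"
proof (intro allI conjI)
  fix i
  have \<mu>_eq: "\<mu> i = (\<lambda>Q. ennreal (laplace_price (gamma X * c i) i Q))"
    by (auto simp: fun_eq_iff laplace_price_def assms(4))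
  show "fair i (\<mu> i)"
    by (simp add: fair_def assms(4))
  show "arbitrage_free (\<mu> i)"
    unfolding \<mu>_eq by (rule arbitrage_free_laplace_price)
  show "compensating X i (W i) (\<mu> i)"
    unfolding compensating_def
  proof (intro allI impI)
    fix Q :: "'n query"
    assume "is_query Q"
    then obtain q v where Q: "Q = (q, v)" and "v > 0" by (cases Q) (auto simp: is_query_def)
    have "W i (privacy_loss X i Q) \<le> ennreal (c i) * ennreal (gamma X * \<bar>q $ i\<bar> / sqrt (v / 2))"
      unfolding assms(3) Q using privacy_loss_le[OF assms(1) \<open>v > 0\<close>] by (rule mult_left_mono) simp
    also have "\<dots> = \<mu> i Q"
      using assms(2)[of i] by (simp add: Q assms(4) field_simps flip: ennreal_mult')
    finally show "W i (privacy_loss X i Q) \<le> \<mu> i Q" .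
  qed
qed

end
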